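(* Under the setting in the context, for every $\pi\in\Pi_\rho$, $$\sup_{r\in\mathcal U^{(1)}_\varepsilon}\Big[\sup_{\beta\in\Pi_\rho}J_r(\beta)-J_r(\pi)\Big]=\sup_{\beta\in\Pi_\rho}\Big\{J_{\hat r}(\beta)-J_{\hat r}(\pi)+\varepsilon\,C_{\infty,\mathrm{rel}}(\beta,\pi;\mu,\mathcal D)\Big\}.$$
   Context: Setting: prompts $x\sim\mathcal D$ on a space $\mathcal X$; a finite response set $\mathcal Y$; reward functions $r:\mathcal X\times\mathcal Y\to\mathbb R$ (measurable, with the expectations below finite), $r(x)\in\mathbb R^{\mathcal Y}$ the promptwise vector; $\hat r$ a fixed proxy reward. $\Pi_\rho$ is a nonempty set of policies (a local policy class); each $\pi\in\Pi_\rho$ has a bounded measurable linear representation $z_\pi(x)\in\mathbb R^{\mathcal Y}$ (e.g. $z_\pi(x)=\pi(\cdot\mid x)$) with $J_r(\pi)=\mathbb E_{x\sim\mathcal D}[\langle z_\pi(x),r(x)\rangle]$. For each $x$, $\mu_x$ is a probability distribution on $\mathcal Y$ with $\mu_x(y)>0$ for all $y$. Weighted norms: $\|e\|_{1,\mu_x}:=\sum_y\mu_x(y)|e(y)|$, $\|v\|_{\infty,\mu_x^{-1}}:=\max_y|v(y)|/\mu_x(y)$. For $\varepsilon>0$, $\mathcal U^{(1)}_\varepsilon:=\{r:\ \mathbb E_{x\sim\mathcal D}[\|r(x)-\hat r(x)\|_{1,\mu_x}]\le\varepsilon\}$. Relative integrated concentrability: $C_{\infty,\mathrm{rel}}(\beta,\pi;\mu,\mathcal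 D):=\operatorname{ess\,sup}_{x\sim\mathcal D}\|z_\beta(x)-z_\pi(x)\|_{\infty,\mu_x^{-1}}$. *)

theory Defs
  imports "HOL-Probability.Probability"
begin

definition ip :: "('y::finite \<Rightarrow> real) \<Rightarrow> ('y \<Rightarrow> real) \<Rightarrow> real" where
  "ip v w = (\<Sum>y\<in>UNIV. v y * w y)"

definition Jval :: "'x measure \<Rightarrow> ('p \<Rightarrow> 'x \<Rightarrow> 'y::finite \<Rightarrow> real)
    \<Rightarrow> ('x \<Rightarrow> 'y \<Rightarrow> real) \<Rightarrow> 'p \<Rightarrow> real" where
  "Jval D z r p = (\<integral>x. ip (z p x) (r x) \<partial>D)"

definition norm1_mu :: "('y::finite \<Rightarrow> real) \<Rightarrow> ('y \<Rightarrow> real) \<Rightarrow> real" where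
  "norm1_mu m e = (\<Sum>y\<in>UNIV. m y * \<bar>e y\<bar>)"

definition norminf_mu_inv :: "('y::finite \<Rightarrow> real) \<Rightarrow> ('y \<Rightarrow> real) \<Rightarrow> real" where
  "norminf_mu_inv m v = Max ((\<lambda>y. \<bar>v y\<bar> / m y) ` UNIV)"

definition reward_ok :: "'x measure \<Rightarrow> 'p set \<Rightarrow> ('p \<Rightarrow> 'x \<Rightarrow> 'y::finite \<Rightarrow> real)
    \<Rightarrow> ('x \<Rightarrow> 'y \<Rightarrow> real) \<Rightarrow> ('x \<Rightarrow> 'y \<Rightarrow> real) \<Rightarrow> ('x \<Rightarrow> 'y \<Rightarrow> real) \<Rightarrow> bool" where
  "reward_ok D PP z mu rhat r \<longleftrightarrow>
     (\<forall>y. (\<lambda>x. r x y) \<in> borel_measurable D) \<and>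
     (\<forall>b\<in>PP. integrable D (\<lambda>x. ip (z b x) (r x))) \<and>
     integrable D (\<lambda>x. norm1_mu (mu x) (\<lambda>y. r x y - rhat x y))"

definition U1 :: "'x measure \<Rightarrow> 'p set \<Rightarrow> ('p \<Rightarrow> 'x \<Rightarrow> 'y::finite \<Rightarrow> real)
    \<Rightarrow> ('x \<Rightarrow> 'y \<Rightarrow> real) \<Rightarrow> ('x \<Rightarrow> 'y \<Rightarrow> real) \<Rightarrow> real \<Rightarrow> ('x \<Rightarrow> 'y \<Rightarrow> real) set" where
  "U1 D PP z mu rhat eps = {r. reward_ok D PP z mu rhat r \<and>
      (\<integral>x. norm1_mu (mu x) (\<lambda>y. r x y - rhat x y) \<partial>D) \<le> eps}"

definition Crel :: "'x measure \<Rightarrow> ('x \<Rightarrow> 'y::finite \<Rightarrow> real)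
    \<Rightarrow> ('p \<Rightarrow> 'x \<Rightarrow> 'y \<Rightarrow> real) \<Rightarrow> 'p \<Rightarrow> 'p \<Rightarrow> ereal" where
  "Crel D mu z b p = esssup D (\<lambda>x. ereal (norminf_mu_inv (mu x) (\<lambda>y. z b x y - z p x y)))"

end

theory Submission
  imports Defs
begin

text \<open>For a reward r in the uncertainty set, J_r(b) - J_r(p) differs from the proxy gap
  J_rhat(b) - J_rhat(p) by E <z_b - z_p, r - rhat>, which Hoelder's inequality for the dual pair
  of norms ||.||_{1,mu} and ||.||_{inf,1/mu} bounds by eps * C_rel(b, p).  Conversely, for every
  t < C_rel(b, p) some response y0 has |z_b - z_p|(x, y0) > t * mu_x(y0) on a set S of positive
  measure; spending the whole budget eps on y0 over S, with the sign of z_b - z_p, gains at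
  least eps * t.\<close>

lemma ip_diff_diff:
  "ip a r - ip c r - (ip a h - ip c h) = ip (\<lambda>y. a y - c y) (\<lambda>y. r y - h y)"
  unfolding ip_def by (simp add: algebra_simps sum_subtractf sum.distrib)

lemma norm1_mu_nonneg: "(\<And>y. 0 \<le> m y) \<Longrightarrow> 0 \<le> norm1_mu m e"
  unfolding norm1_mu_def by (simp add: sum_nonneg)

lemma abs_le_norminf_mu_inv_mult:
  assumes "\<And>y. 0 < m y" shows "\<bar>v y\<bar> \<le> norminf_mu_inv m v * m y"
proof -
  have "\<bar>v y\<bar> / m y \<le> norminf_mu_inv m v"
    unfolding norminf_mu_inv_def by (rule Max_ge) auto
  then show ?thesis using assms by (simp add: pos_divide_le_eq)
qed

lemma norminf_mu_inv_nonneg: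
  assumes "\<And>y. 0 < m y" shows "0 \<le> norminf_mu_inv m v"
proof -
  have "0 \<le> norminf_mu_inv m v * m y" for y
    using abs_le_norminf_mu_inv_mult[of m, OF assms, of v y] abs_ge_zero[of "v y"] by linarith
  then show ?thesis using assms by (meson zero_le_mult_iff linorder_not_le)
qed

lemma ip_le_norminf_mu_inv_mult_norm1_mu:
  assumes "\<And>y. 0 < m y" shows "ip v e \<le> norminf_mu_inv m v * norm1_mu m e"
proof -
  have "v y * e y \<le> norminf_mu_inv m v * (m y * \<bar>e y\<bar>)" for y
  proof -
    have "v y * e y \<le> \<bar>v y\<bar> * \<bar>e y\<bar>" by (metis abs_ge_self abs_mult)
    also have "\<dots> \<le> norminf_mu_inv m v * m y * \<bar>e y\<bar>"
      by (intro mult_right_mono abs_le_norminf_mu_inv_mult assms) simp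
    finally show ?thesis by simp
  qed
  then show ?thesis unfolding ip_def norm1_mu_def by (simp add: sum_distrib_left sum_mono)
qed

definition add_coord :: "('x \<Rightarrow> 'y \<Rightarrow> real) \<Rightarrow> 'y \<Rightarrow> ('x \<Rightarrow> real) \<Rightarrow> 'x \<Rightarrow> 'y \<Rightarrow> real" where
  "add_coord r y0 g x y = r x y + (if y = y0 then g x else 0)"

lemma add_coord_minus: "(\<lambda>y. add_coord r y0 g x y - r x y) = (\<lambda>y. if y = y0 then g x else 0)"
  unfolding add_coord_def by auto

lemma ip_coord: "ip v (\<lambda>y. if y = y0 then k else 0) = v y0 * k"
  unfolding ip_def by (simp add: if_distrib cong: if_cong)

lemma norm1_mu_coord: "norm1_mu m (\<lambda>y. if y = y0 then k else 0) = m y0 * \<bar>k\<bar>"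
  unfolding norm1_mu_def by (simp add: if_distrib cong: if_cong)

lemma ip_add_coord: "ip v (add_coord r y0 g x) = ip v (r x) + v y0 * g x"
  using ip_coord[of v y0 "g x"]
  unfolding ip_def add_coord_def by (simp add: distrib_left sum.distrib)

lemma integral_ip_le_mult_integral_norm1_mu:
  assumes "AE x in M. norminf_mu_inv (m x) (v x) \<le> c"
    and "AE x in M. \<forall>y. 0 < m x y"
    and "integrable M (\<lambda>x. ip (v x) (e x))"
    and "integrable M (\<lambda>x. norm1_mu (m x) (e x))"
  shows "(\<integral>x. ip (v x) (e x) \<partial>M) \<le> c * (\<integral>x. norm1_mu (m x) (e x) \<partial>M)"
proof -
  have "AE x in M. ip (v x) (e x) \<le> c * norm1_mu (m x) (e x)"
    using assms(1,2)
  proof eventually_elim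
    case (elim x)
    then have "ip (v x) (e x) \<le> norminf_mu_inv (m x) (v x) * norm1_mu (m x) (e x)"
      by (intro ip_le_norminf_mu_inv_mult_norm1_mu) simp
    also have "\<dots> \<le> c * norm1_mu (m x) (e x)"
      using elim by (intro mult_right_mono norm1_mu_nonneg) (auto intro: less_imp_le)
    finally show ?case .
  qed
  then have "(\<integral>x. ip (v x) (e x) \<partial>M) \<le> (\<integral>x. c * norm1_mu (m x) (e x) \<partial>M)"
    using assms(3,4) by (intro integral_mono_AE) auto
  then show ?thesis by simp
qed

lemma less_esssup_Max_imp_ex_not_null:
  fixes f :: "'a \<Rightarrow> 'y::finite \<Rightarrow> real"
  assumes [measurable]: "\<And>y. (\<lambda>x. f x y) \<in> borel_measurable M"
    and "ereal t < esssup M (\<lambda>x. ereal (Max (range (f x))))"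
  shows "\<exists>y. {x \<in> space M. t < f x y} \<notin> null_sets M"
proof (rule ccontr)
  assume "\<not> ?thesis"
  then have "(\<Union>y. {x \<in> space M. t < f x y}) \<in> null_sets M"
    by (intro null_sets_UN') auto
  moreover have "{x \<in> space M. ereal t < ereal (Max (range (f x)))} = (\<Union>y. {x \<in> space M. t < f x y})"
    by (auto simp: Max_gr_iff)
  moreover have "0 < emeasure M {x \<in> space M. ereal t < ereal (Max (range (f x)))}"
    using assms(2) by (intro esssup_pos_measure) measurable
  ultimately show False by (simp add: null_setsD1)
qed

lemma integral_indicator_mult_pos:
  fixes f :: "'a \<Rightarrow> real"
  assumes "S \<in> sets M" "S \<notin> null_sets M" "\<And>x. x \<in> S \<Longrightarrow> 0 < f x"
    and "integrable M (\<lambda>x. indicator S x * f x)"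
  shows "0 < (\<integral>x. indicator S x * f x \<partial>M)"
proof -
  have nonneg: "0 \<le> indicator S x * f x" for x
    using assms(3) by (auto simp: indicator_def intro: less_imp_le)
  have "(\<integral>x. indicator S x * f x \<partial>M) \<noteq> 0"
  proof
    assume "(\<integral>x. indicator S x * f x \<partial>M) = 0"
    then have "AE x in M. indicator S x * f x = 0"
      using assms(4) nonneg by (simp add: integral_nonneg_eq_0_iff_AE)
    then have "AE x in M. x \<notin> S"
      by eventually_elim (auto simp: indicator_def split: if_splits dest: assms(3))
    then show False
      using assms(1,2) by (simp add: AE_iff_null_sets)
  qed
  then show ?thesis using nonneg by (simp add: order_less_le Bochner_Integration.integral_nonneg)
qed

lemma SUP_minus_eq_SUP_if_bounds:
  fixes f :: "'r \<Rightarrow> 'b \<Rightarrow> real" and R :: "'b \<Rightarrow> ereal"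
  assumes upper: "\<And>r b. r \<in> U \<Longrightarrow> b \<in> B \<Longrightarrow> ereal (f r b - f r p) \<le> R b"
    and lower: "\<And>b s. b \<in> B \<Longrightarrow> s < R b \<Longrightarrow> \<exists>r\<in>U. s \<le> ereal (f r b - f r p)"
  shows "(SUP r\<in>U. (SUP b\<in>B. ereal (f r b)) - ereal (f r p)) = (SUP b\<in>B. R b)"
proof (rule antisym)
  show "(SUP r\<in>U. (SUP b\<in>B. ereal (f r b)) - ereal (f r p)) \<le> (SUP b\<in>B. R b)"
  proof (rule SUP_least)
    fix r assume r: "r \<in> U"
    have "ereal (f r b) \<le> (SUP b\<in>B. R b) + ereal (f r p)" if b: "b \<in> B" for b
    proof -
      have "ereal (f r b) \<le> R b + ereal (f r p)"
        using upper[OF r b] by (cases "R b") auto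
      also have "\<dots> \<le> (SUP b\<in>B. R b) + ereal (f r p)"
        by (intro add_right_mono SUP_upper b)
      finally show ?thesis .
    qed
    then have "(SUP b\<in>B. ereal (f r b)) \<le> (SUP b\<in>B. R b) + ereal (f r p)"
      by (rule SUP_least)
    then show "(SUP b\<in>B. ereal (f r b)) - ereal (f r p) \<le> (SUP b\<in>B. R b)"
      by (cases "SUP b\<in>B. ereal (f r b)"; cases "SUP b\<in>B. R b") auto
  qed
next
  show "(SUP b\<in>B. R b) \<le> (SUP r\<in>U. (SUP b\<in>B. ereal (f r b)) - ereal (f r p))"
  proof (rule SUP_least, rule dense_le)
    fix b s assume b: "b \<in> B" and "s < R b"
    then obtain r where r: "r \<in> U" and s: "s \<le> ereal (f r b - f r p)"
      using lower by blast
    have "ereal (f r b) \<le> (SUP b\<in>B. ereal (f r b))" by (rule SUP_upper[OF b])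
    then have "ereal (f r b - f r p) \<le> (SUP b\<in>B. ereal (f r b)) - ereal (f r p)"
      by (cases "SUP b\<in>B. ereal (f r b)") auto
    also have "\<dots> \<le> (SUP r\<in>U. (SUP b\<in>B. ereal (f r b)) - ereal (f r p))"
      by (rule SUP_upper[OF r])
    finally show "s \<le> (SUP r\<in>U. (SUP b\<in>B. ereal (f r b)) - ereal (f r p))"
      using s by simp
  qed
qed

locale robust_reward_setting = prob_space D
  for D :: "'x measure" +
  fixes PP :: "'p set" and z :: "'p \<Rightarrow> 'x \<Rightarrow> 'y::finite \<Rightarrow> real"
    and mu :: "'x \<Rightarrow> 'y \<Rightarrow> real" and rhat :: "'x \<Rightarrow> 'y \<Rightarrow> real"
    and eps :: real and p :: 'p
  assumes z_measurable: "\<And>b y. b \<in> PP \<Longrightarrow> (\<lambda>x. z b x y) \<in> borel_measurable D"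
    and z_bounded: "\<And>b. b \<in> PP \<Longrightarrow> \<exists>B. \<forall>x\<in>space D. \<forall>y. \<bar>z b x y\<bar> \<le> B"
    and mu_measurable[measurable]: "\<And>y. (\<lambda>x. mu x y) \<in> borel_measurable D"
    and mu_pos: "\<And>x y. x \<in> space D \<Longrightarrow> 0 < mu x y"
    and mu_sum: "\<And>x. x \<in> space D \<Longrightarrow> (\<Sum>y\<in>UNIV. mu x y) = 1"
    and rhat_ok: "reward_ok D PP z mu rhat rhat"
    and eps_pos: "0 < eps"
    and p_in: "p \<in> PP"
begin

lemma rhat_measurable[measurable]: "(\<lambda>x. rhat x y) \<in> borel_measurable D"
  using rhat_ok unfolding reward_ok_def by auto

lemma rhat_in_U1: "rhat \<in> U1 D PP z mu rhat eps"
  using rhat_ok eps_pos unfolding U1_def by (simp add: norm1_mu_def)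

lemma mu_le_1: "x \<in> space D \<Longrightarrow> mu x y \<le> 1"
  using member_le_sum[of y UNIV "mu x"] mu_pos mu_sum by (auto intro: less_imp_le)

lemma integrable_mu: "integrable D (\<lambda>x. mu x y)"
  by (rule integrable_const_bound[where B = 1]) (auto intro!: AE_I2 simp: less_imp_le mu_pos mu_le_1)

lemma integrable_z:
  assumes b: "b \<in> PP" shows "integrable D (\<lambda>x. z b x y)"
proof -
  obtain B where "\<And>x y. x \<in> space D \<Longrightarrow> \<bar>z b x y\<bar> \<le> B" using z_bounded[OF b] by blast
  then show ?thesis
    using z_measurable[OF b] by (intro integrable_const_bound[where B = B] AE_I2) auto
qed

lemma Jval_gap_eq:
  assumes r: "reward_ok D PP z mu rhat r" and b: "b \<in> PP"
  shows "integrable D (\<lambda>x. ip (\<lambda>y. z b x y - z p x y) (\<lambda>y. r x y - rhat x y))"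
    and "Jval D z r b - Jval D z r p = Jval D z rhat b - Jval D z rhat p
          + (\<integral>x. ip (\<lambda>y. z b x y - z p x y) (\<lambda>y. r x y - rhat x y) \<partial>D)"
proof -
  have int: "integrable D (\<lambda>x. ip (z b x) (r x))" "integrable D (\<lambda>x. ip (z p x) (r x))"
    "integrable D (\<lambda>x. ip (z b x) (rhat x))" "integrable D (\<lambda>x. ip (z p x) (rhat x))"
    using r rhat_ok b p_in unfolding reward_ok_def by auto
  have eq: "(\<lambda>x. ip (\<lambda>y. z b x y - z p x y) (\<lambda>y. r x y - rhat x y)) =
      (\<lambda>x. ip (z b x) (r x) - ip (z p x) (r x) - (ip (z b x) (rhat x) - ip (z p x) (rhat x)))"
    by (simp add: ip_diff_diff)
  show "integrable D (\<lambda>x. ip (\<lambda>y. z b x y - z p x y) (\<lambda>y. r x y - rhat x y))"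
    unfolding eq using int by auto
  show "Jval D z r b - Jval D z r p = Jval D z rhat b - Jval D z rhat p
          + (\<integral>x. ip (\<lambda>y. z b x y - z p x y) (\<lambda>y. r x y - rhat x y) \<partial>D)"
    unfolding eq Jval_def using int by (simp add: Bochner_Integration.integral_diff)
qed

lemma Crel_nonneg: "0 \<le> Crel D mu z b p"
proof -
  have "0 = esssup D (\<lambda>x. 0::ereal)" by (simp add: esssup_const emeasure_space_1)
  also have "\<dots> \<le> Crel D mu z b p"
    unfolding Crel_def
    by (intro esssup_AE_mono AE_I2) (simp_all add: mu_pos norminf_mu_inv_nonneg)
  finally show ?thesis .
qed

lemma Jval_gap_le:
  assumes r: "r \<in> U1 D PP z mu rhat eps" and b: "b \<in> PP"
  shows "ereal (Jval D z r b - Jval D z r p)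
    \<le> ereal (Jval D z rhat b - Jval D z rhat p) + ereal eps * Crel D mu z b p"
proof (cases "Crel D mu z b p")
  case (real c)
  from r have r_ok: "reward_ok D PP z mu rhat r"
    and budget: "(\<integral>x. norm1_mu (mu x) (\<lambda>y. r x y - rhat x y) \<partial>D) \<le> eps"
    unfolding U1_def by auto
  have "AE x in D. norminf_mu_inv (mu x) (\<lambda>y. z b x y - z p x y) \<le> c"
    using esssup_AE[of "\<lambda>x. ereal (norminf_mu_inv (mu x) (\<lambda>y. z b x y - z p x y))" D] real
    by (simp add: Crel_def)
  then have "(\<integral>x. ip (\<lambda>y. z b x y - z p x y) (\<lambda>y. r x y - rhat x y) \<partial>D)
      \<le> c * (\<integral>x. norm1_mu (mu x) (\<lambda>y. r x y - rhat x y) \<partial>D)"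
    using r_ok Jval_gap_eq(1)[OF r_ok b] mu_pos
    by (intro integral_ip_le_mult_integral_norm1_mu) (auto simp: reward_ok_def)
  also have "\<dots> \<le> c * eps"
    using budget Crel_nonneg[of b] real by (intro mult_left_mono) auto
  finally show ?thesis
    using Jval_gap_eq(2)[OF r_ok b] real by (simp add: mult.commute)
qed (use eps_pos Crel_nonneg[of b] in auto)

lemma reward_ok_add_coord:
  assumes [measurable]: "g \<in> borel_measurable D" and g_bound: "\<And>x. x \<in> space D \<Longrightarrow> \<bar>g x\<bar> \<le> c"
  shows "reward_ok D PP z mu rhat (add_coord rhat y0 g)"
  unfolding reward_ok_def
proof (intro conjI ballI allI)
  show "(\<lambda>x. add_coord rhat y0 g x y) \<in> borel_measurable D" for y
    unfolding add_coord_def by measurable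
next
  fix b assume b: "b \<in> PP"
  have [measurable]: "(\<lambda>x. z b x y0) \<in> borel_measurable D" using z_measurable[OF b] .
  obtain B where B: "\<And>x y. x \<in> space D \<Longrightarrow> \<bar>z b x y\<bar> \<le> B" using z_bounded[OF b] by blast
  have "integrable D (\<lambda>x. z b x y0 * g x)"
  proof (rule integrable_const_bound[where B = "B * c"])
    show "AE x in D. norm (z b x y0 * g x) \<le> B * c"
      using B g_bound by (intro AE_I2) (simp add: abs_mult mult_mono')
  qed measurable
  moreover have "integrable D (\<lambda>x. ip (z b x) (rhat x))"
    using rhat_ok b unfolding reward_ok_def by auto
  ultimately show "integrable D (\<lambda>x. ip (z b x) (add_coord rhat y0 g x))"
    by (simp add: ip_add_coord)
next
  have "integrable D (\<lambda>x. mu x y0 * \<bar>g x\<bar>)"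
  proof (rule integrable_const_bound[where B = c])
    show "AE x in D. norm (mu x y0 * \<bar>g x\<bar>) \<le> c"
    proof (rule AE_I2)
      fix x assume x: "x \<in> space D"
      have "mu x y0 * \<bar>g x\<bar> \<le> 1 * c"
        using mu_pos[OF x] mu_le_1[OF x] g_bound[OF x] by (intro mult_mono) auto
      then show "norm (mu x y0 * \<bar>g x\<bar>) \<le> c" using mu_pos[OF x, of y0] by (simp add: abs_mult)
    qed
  qed measurable
  then show "integrable D (\<lambda>x. norm1_mu (mu x) (\<lambda>y. add_coord rhat y0 g x y - rhat x y))"
    by (simp add: add_coord_minus norm1_mu_coord)
qed

lemma ex_not_null_ratio_gt:
  assumes b: "b \<in> PP" and t: "ereal t < Crel D mu z b p"
  shows "\<exists>y0. {x \<in> space D. t < \<bar>z b x y0 - z p x y0\<bar> / mu x y0} \<notin> null_sets D"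
proof (rule less_esssup_Max_imp_ex_not_null)
  show "(\<lambda>x. \<bar>z b x y - z p x y\<bar> / mu x y) \<in> borel_measurable D" for y
    using z_measurable[OF b] z_measurable[OF p_in] by measurable
qed (use t in \<open>simp add: Crel_def norminf_mu_inv_def\<close>)

text \<open>The equality case of Hoelder's inequality, realised on the set S.\<close>

lemma sign_bump_reward:
  assumes b: "b \<in> PP" and S: "S \<in> sets D" and "0 \<le> c"
    and d_ne_0: "\<And>x. x \<in> S \<Longrightarrow> z b x y0 \<noteq> z p x y0"
  defines "r \<equiv> add_coord rhat y0 (\<lambda>x. c * sgn (z b x y0 - z p x y0) * indicator S x)"
  shows "r \<in> U1 D PP z mu rhat (c * (\<integral>x. indicator S x * mu x y0 \<partial>D))"
    and "integrable D (\<lambda>x. indicator S x * \<bar>z b x y0 - z p x y0\<bar>)"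
    and "Jval D z r b - Jval D z r p = Jval D z rhat b - Jval D z rhat p
          + c * (\<integral>x. indicator S x * \<bar>z b x y0 - z p x y0\<bar> \<partial>D)"
proof -
  have [measurable]: "(\<lambda>x. z b x y0 - z p x y0) \<in> borel_measurable D"
    using z_measurable[OF b] z_measurable[OF p_in] by measurable
  have r_ok: "reward_ok D PP z mu rhat r"
    unfolding r_def using \<open>0 \<le> c\<close> S
    by (intro reward_ok_add_coord[where c = c]) (auto simp: abs_mult abs_sgn_eq indicator_def)
  have "(\<lambda>x. norm1_mu (mu x) (\<lambda>y. r x y - rhat x y)) = (\<lambda>x. c * (indicator S x * mu x y0))"
    using d_ne_0 \<open>0 \<le> c\<close>
    by (auto simp: r_def add_coord_minus norm1_mu_coord abs_mult indicator_def)
  with r_ok show "r \<in> U1 D PP z mu rhat (c * (\<integral>x. indicator S x * mu x y0 \<partial>D))"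
    unfolding U1_def by simp
  have ip_eq: "(\<lambda>x. ip (\<lambda>y. z b x y - z p x y) (\<lambda>y. r x y - rhat x y))
      = (\<lambda>x. c * (indicator S x * \<bar>z b x y0 - z p x y0\<bar>))"
    by (auto simp: r_def add_coord_minus ip_coord abs_sgn fun_eq_iff)
  show "Jval D z r b - Jval D z r p = Jval D z rhat b - Jval D z rhat p
          + c * (\<integral>x. indicator S x * \<bar>z b x y0 - z p x y0\<bar> \<partial>D)"
    using Jval_gap_eq(2)[OF r_ok b] unfolding ip_eq by simp
  show "integrable D (\<lambda>x. indicator S x * \<bar>z b x y0 - z p x y0\<bar>)"
    using integrable_real_mult_indicator[OF S integrable_abs[OF
        Bochner_Integration.integrable_diff[OF integrable_z[OF b] integrable_z[OF p_in]]]]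
    by (simp add: mult.commute)
qed

lemma exists_reward_gap_ge:
  assumes b: "b \<in> PP" and t: "0 < t" "ereal t < Crel D mu z b p"
  shows "\<exists>r\<in>U1 D PP z mu rhat eps.
    Jval D z rhat b - Jval D z rhat p + eps * t \<le> Jval D z r b - Jval D z r p"
proof -
  obtain y0 where S_not_null: "{x \<in> space D. t < \<bar>z b x y0 - z p x y0\<bar> / mu x y0} \<notin> null_sets D"
    using ex_not_null_ratio_gt[OF b t(2)] by blast
  define S where "S = {x \<in> space D. t < \<bar>z b x y0 - z p x y0\<bar> / mu x y0}"
  have S_sets: "S \<in> sets D"
    unfolding S_def using z_measurable[OF b] z_measurable[OF p_in] by measurable
  have S_ratio: "t * mu x y0 < \<bar>z b x y0 - z p x y0\<bar>" if "x \<in> S" for x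
    using that mu_pos[of x y0] unfolding S_def by (simp add: pos_less_divide_eq)
  then have d_ne_0: "z b x y0 \<noteq> z p x y0" if "x \<in> S" for x
    using that t(1) mu_pos[of x y0] S_def by (auto dest: mult_pos_pos)
  define m where "m = (\<integral>x. indicator S x * mu x y0 \<partial>D)"
  have m_int: "integrable D (\<lambda>x. indicator S x * mu x y0)"
    using integrable_real_mult_indicator[OF S_sets integrable_mu] by (simp add: mult.commute)
  have "0 < m"
    unfolding m_def using S_sets S_not_null m_int mu_pos unfolding S_def
    by (intro integral_indicator_mult_pos) auto
  define c where "c = eps / m"
  have "0 < c" unfolding c_def using \<open>0 < m\<close> eps_pos by simp
  have "eps = c * m" unfolding c_def using \<open>0 < m\<close> by simp
  note bump = sign_bump_reward[OF b S_sets less_imp_le[OF \<open>0 < c\<close>] d_ne_0, unfolded m_def[symmetric]]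
  have "eps * t = c * (\<integral>x. t * (indicator S x * mu x y0) \<partial>D)"
    using \<open>eps = c * m\<close> by (simp add: m_def)
  also have "\<dots> \<le> c * (\<integral>x. indicator S x * \<bar>z b x y0 - z p x y0\<bar> \<partial>D)"
    using m_int bump(2) S_ratio[THEN less_imp_le] \<open>0 < c\<close>
    by (intro mult_left_mono integral_mono) (auto simp: indicator_def)
  finally show ?thesis
    using bump(1,3) \<open>eps = c * m\<close> by (intro bexI) auto
qed

lemma exists_reward_gap_above:
  assumes b: "b \<in> PP"
    and s: "s < ereal (Jval D z rhat b - Jval D z rhat p) + ereal eps * Crel D mu z b p"
  shows "\<exists>r\<in>U1 D PP z mu rhat eps. s \<le> ereal (Jval D z r b - Jval D z r p)"
proof (cases "s \<le> ereal (Jval D z rhat b - Jval D z rhat p)")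
  case True
  then show ?thesis using rhat_in_U1 by blast
next
  case False
  define \<Delta> where "\<Delta> = Jval D z rhat b - Jval D z rhat p"
  obtain s' where s': "s = ereal s'" "\<Delta> < s'"
    using False s unfolding \<Delta>_def by (cases s) auto
  define t where "t = (s' - \<Delta>) / eps"
  have "0 < t" unfolding t_def using s' eps_pos by simp
  moreover have "ereal t < Crel D mu z b p"
  proof (cases "Crel D mu z b p")
    case (real c)
    then have "s' < \<Delta> + eps * c" using s s' unfolding \<Delta>_def by simp
    then show ?thesis
      unfolding t_def using real eps_pos by (simp add: pos_divide_less_eq mult.commute)
  qed (use Crel_nonneg[of b] in auto)
  ultimately obtain r where "r \<in> U1 D PP z mu rhat eps" "\<Delta> + eps * t \<le> Jval D z r b - Jval D z r p"
    using exists_reward_gap_ge[OF b] unfolding \<Delta>_def by blast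
  moreover have "\<Delta> + eps * t = s'" unfolding t_def using eps_pos by simp
  ultimately show ?thesis using s' by auto
qed

end

theorem mainTheorem15:
  fixes D :: "'x measure" and PP :: "'p set" and z :: "'p \<Rightarrow> 'x \<Rightarrow> 'y::finite \<Rightarrow> real"
    and mu :: "'x \<Rightarrow> 'y \<Rightarrow> real" and rhat :: "'x \<Rightarrow> 'y \<Rightarrow> real"
    and eps :: real and p :: 'p
  assumes "prob_space D"
    and "PP \<noteq> {}"
    and z_meas: "\<forall>b\<in>PP. \<forall>y. (\<lambda>x. z b x y) \<in> borel_measurable D"
    and z_bdd: "\<forall>b\<in>PP. \<exists>B. \<forall>x\<in>space D. \<forall>y. \<bar>z b x y\<bar> \<le> B"
    and mu_meas: "\<forall>y. (\<lambda>x. mu x y) \<in> borel_measurable D"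
    and mu_pos: "\<forall>x\<in>space D. \<forall>y. mu x y > 0"
    and mu_sum: "\<forall>x\<in>space D. (\<Sum>y\<in>UNIV. mu x y) = 1"
    and rhat_ok: "reward_ok D PP z mu rhat rhat"
    and "eps > 0"
    and "p \<in> PP"
  shows "(SUP r\<in>U1 D PP z mu rhat eps.
            (SUP b\<in>PP. ereal (Jval D z r b)) - ereal (Jval D z r p))
       = (SUP b\<in>PP. ereal (Jval D z rhat b - Jval D z rhat p) + ereal eps * Crel D mu z b p)"
proof -
  interpret robust_reward_setting D PP z mu rhat eps p
    using assms by (intro robust_reward_setting.intro robust_reward_setting_axioms.intro) auto
  show ?thesis
    by (rule SUP_minus_eq_SUP_if_bounds[where f = "Jval D z"])
      (fact Jval_gap_le, fact exists_reward_gap_above)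
qed

end
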